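(* Let $P$ be a finite nonempty set of points lying in a single quadrant $Q$ with respect to the origin $s$, and let $e\neq s$ be such that the line $\overline{se}$ is in the quadrant $Q$ and lies between the two bounding lines, i.e. $\theta_{lb} \le \theta_{s,e} \le \theta_{ub}$. Then, with $d^{\max}=\max_{p\in P} d(p,\overline{se})$, $$d^{\max} \ge d^{lb} := \max\Big\{ \min\{d(l_1,\overline{se}),d(l_2,\overline{se})\},\ \min\{d(u_1,\overline{se}),d(u_2,\overline{se})\},\ D\Big\},$$ where $D = d^{corner\text{-}near}$ if $d(s,e) < d(s,c_f)$ and $D = d^{corner\text{-}far}$ if $d(s,e)\ge d(s,c_f)$; and $$d^{\max} \le d^{ub} := \max\{ d^{intersection},\ d^{corner\text{-}far}\},$$ where $d^{intersection}$ here denotes $\max\{d(l_1,\overline{se}),d(l_2,\overline{se}),d(u_1,\overline{se}),d(u_2,\overline{se})\}$.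
   Context: Bounded Quadrant System (BQS) setup. Points are in the plane with UTM-projected $x$ and $y$ axes, and the start point $s$ is taken as the origin. For a point $p\ne s$, $\theta(p)\in[0,2\pi)$ is the angle between the positive $x$ axis and the vector from $s$ to $p$; $\theta_{s,e}=\theta(e)$. The four quadrants are $Q_k=\{p\neq s: (k-1)\pi/2 \le \theta(p) < k\pi/2\}$, $k=1,\dots,4$; quadrant $Q_k$ has angle range $[\theta^Q_{start},\theta^Q_{end}) = [(k-1)\pi/2,k\pi/2)$. A line $\overline{se}$ is "in" quadrant $Q$ if $\theta^Q_{start}\le \theta_{s,e}<\theta^Q_{end}$. For a finite nonempty $P\subset Q$: the bounding box is the smallest closed axis-parallel rectangle containing $P$, with corners $c_1,\dots,c_4$; $c_n$ and $c_f$ are the corners of the box nearest to and farthest from the origin $s$ (e.g. in the first quadrant $c_n=(x_{\min},y_{\min})$, $c_f=(x_{\max},y_{\max})$). $\theta_{lb}=\min_{p\in P}\theta(p)$ and $\theta_{ub}=\max_{p\in P}\theta(p)$; the lower (resp. upper) bounding line is the ray from $s$ at angle $\theta_{lb}$ (resp. $\theta_{ub}$). $l_1,l_2$ are the intersection points of the lower bounding line with the boundary of the bounding box and $u_1,u_2$ those of the upper bounding line, with index 1 the intersection nearer to $s$ (they may coincide). $d(p,\overline{se})$ is the Euclidean distance from the point $p$ to the line segment from $s$ to $e$. Notation: $d^{corner}=\{d(c_i,\overline{se}): i=1,\dots,4\}$, $d^{corner\text{-}near}=d(c_n,\overline{se})$, $d^{corner\text{-}far}=d(c_f,\overline{se})$,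 $d^{intersection}=\{d(p,\overline{se}): p\in\{l_1,l_2,u_1,u_2\}\}$. *)

theory Defs
  imports "HOL-Analysis.Analysis"
begin

text \<open>Points are pairs (x,y) of reals (UTM-projected coordinates); the start point s is the origin 0.\<close>

type_synonym pt = "real \<times> real"

definition theta :: "pt \<Rightarrow> real" where
  "theta p = Arg2pi (Complex (fst p) (snd p))"

definition quadrant :: "nat \<Rightarrow> pt set" where
  "quadrant k = {p. p \<noteq> 0 \<and> (real k - 1) * pi / 2 \<le> theta p \<and> theta p < real k * pi / 2}"

definition dseg :: "pt \<Rightarrow> pt \<Rightarrow> real" where
  "dseg e p = infdist p (closed_segment 0 e)"

definition xmin :: "pt set \<Rightarrow> real" where "xmin P = Min (fst ` P)"
definition xmax :: "pt set \<Rightarrow> real" where "xmax P = Max (fst ` P)"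
definition ymin :: "pt set \<Rightarrow> real" where "ymin P = Min (snd ` P)"
definition ymax :: "pt set \<Rightarrow> real" where "ymax P = Max (snd ` P)"

definition bbox :: "pt set \<Rightarrow> pt set" where
  "bbox P = {(x, y). xmin P \<le> x \<and> x \<le> xmax P \<and> ymin P \<le> y \<and> y \<le> ymax P}"

text \<open>Corners of the box nearest to / farthest from the origin. Since the box lies in one
  closed quadrant, these are obtained coordinatewise by choosing the coordinate of smaller
  (resp. larger) absolute value; e.g. in Q_1: c_n = (xmin, ymin), c_f = (xmax, ymax).\<close>
definition c_near :: "pt set \<Rightarrow> pt" where
  "c_near P = ((if \<bar>xmin P\<bar> \<le> \<bar>xmax P\<bar> then xmin P else xmax P),
               (if \<bar>ymin P\<bar> \<le> \<bar>ymax P\<bar> then ymin P else ymax P))"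

definition c_far :: "pt set \<Rightarrow> pt" where
  "c_far P = ((if \<bar>xmin P\<bar> \<le> \<bar>xmax P\<bar> then xmax P else xmin P),
              (if \<bar>ymin P\<bar> \<le> \<bar>ymax P\<bar> then ymax P else ymin P))"

definition theta_lb :: "pt set \<Rightarrow> real" where "theta_lb P = Min (theta ` P)"
definition theta_ub :: "pt set \<Rightarrow> real" where "theta_ub P = Max (theta ` P)"

definition dir :: "real \<Rightarrow> pt" where "dir t = (cos t, sin t)"

text \<open>The ray at angle t meets the (convex, compact) bounding box in a segment; its two
  endpoints are the intersection points of the ray with the boundary of the box,
  index 1 being the one nearer to s (they may coincide).\<close>
definition ray_box_near :: "pt set \<Rightarrow> real \<Rightarrow> pt" where
  "ray_box_near P t = Inf {r. 0 \<le> r \<and> r *\<^sub>R dir t \<in> bbox P} *\<^sub>R dir t"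

definition ray_box_far :: "pt set \<Rightarrow> real \<Rightarrow> pt" where
  "ray_box_far P t = Sup {r. 0 \<le> r \<and> r *\<^sub>R dir t \<in> bbox P} *\<^sub>R dir t"

definition l1 :: "pt set \<Rightarrow> pt" where "l1 P = ray_box_near P (theta_lb P)"
definition l2 :: "pt set \<Rightarrow> pt" where "l2 P = ray_box_far P (theta_lb P)"
definition u1 :: "pt set \<Rightarrow> pt" where "u1 P = ray_box_near P (theta_ub P)"
definition u2 :: "pt set \<Rightarrow> pt" where "u2 P = ray_box_far P (theta_ub P)"

definition d_max :: "pt set \<Rightarrow> pt \<Rightarrow> real" where
  "d_max P e = Max (dseg e ` P)"

definition d_lb :: "pt set \<Rightarrow> pt \<Rightarrow> real" where
  "d_lb P e = Max { min (dseg e (l1 P)) (dseg e (l2 P)),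
                    min (dseg e (u1 P)) (dseg e (u2 P)),
                    (if norm e < norm (c_far P) then dseg e (c_near P) else dseg e (c_far P)) }"

definition d_ub :: "pt set \<Rightarrow> pt \<Rightarrow> real" where
  "d_ub P e = Max { dseg e (l1 P), dseg e (l2 P), dseg e (u1 P), dseg e (u2 P),
                    dseg e (c_far P) }"

end

theory Submission
  imports Defs
begin

text \<open>The distance to the segment from \<open>s = 0\<close> to \<open>e\<close> is convex and vanishes at the
  origin, so at a combination \<open>a p + b q\<close> with \<open>a, b \<ge> 0\<close>, \<open>a + b \<le> 1\<close> it is at most
  its larger value at \<open>p\<close> and \<open>q\<close>. Reflect the quadrant onto the first one. Then \<open>l_1\<close>
  and \<open>u_1\<close> are points of \<open>P\<close> shrunk towards the origin, and \<open>c_n\<close> lies in the triangle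
  spanned by the origin and the points of \<open>P\<close> attaining \<open>x_min\<close> and \<open>y_min\<close>. If
  \<open>|e| \<ge> |c_f|\<close>, the distance of \<open>c_f\<close> is its distance to the line \<open>se\<close>, i.e. a cross
  product with \<open>e\<close>, and \<open>c_f\<close> lies angularly between the points of \<open>P\<close> attaining
  \<open>x_max\<close> and \<open>y_max\<close>. For the upper bound, every point of \<open>P\<close> is a nonnegative
  combination of \<open>l_2\<close> and \<open>u_2\<close>, which lie on the far edges of the box, and therefore
  lies in the quadrilateral with vertices \<open>0, l_2, c_f, u_2\<close>.\<close>

lemma mem_closed_segment_0_iff:
  "x \<in> closed_segment 0 e \<longleftrightarrow> (\<exists>u. 0 \<le> u \<and> u \<le> 1 \<and> x = u *\<^sub>R e)"
  by (auto simp: in_segment)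

lemma dseg_attained:
  obtains u where "0 \<le> u" "u \<le> 1" "dseg e p = dist p (u *\<^sub>R e)"
proof -
  obtain q where "q \<in> closed_segment 0 e" "infdist p (closed_segment 0 e) = dist p q"
    using infdist_attains_inf[of "closed_segment 0 e" p] by auto
  then show ?thesis using that unfolding dseg_def mem_closed_segment_0_iff by auto
qed

lemma dseg_le_dist: "0 \<le> u \<Longrightarrow> u \<le> 1 \<Longrightarrow> dseg e p \<le> dist p (u *\<^sub>R e)"
  unfolding dseg_def by (rule infdist_le) (auto simp: mem_closed_segment_0_iff)

lemma dseg_nonneg: "0 \<le> dseg e p"
  unfolding dseg_def by (rule infdist_nonneg)

lemma dseg_0 [simp]: "dseg e 0 = 0"
  unfolding dseg_def by (rule infdist_zero) (simp add: mem_closed_segment_0_iff)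

lemma dseg_conic_comb_le:
  assumes "0 \<le> a" "0 \<le> b" "a + b \<le> 1"
  shows "dseg e (a *\<^sub>R p + b *\<^sub>R q) \<le> a * dseg e p + b * dseg e q"
proof -
  obtain u where u: "0 \<le> u" "u \<le> 1" "dseg e p = dist p (u *\<^sub>R e)" by (rule dseg_attained)
  obtain v where v: "0 \<le> v" "v \<le> 1" "dseg e q = dist q (v *\<^sub>R e)" by (rule dseg_attained)
  have "a * u + b * v \<le> a + b"
    using assms u v by (intro add_mono) (auto intro: mult_left_le)
  then have "dseg e (a *\<^sub>R p + b *\<^sub>R q) \<le> dist (a *\<^sub>R p + b *\<^sub>R q) ((a * u + b * v) *\<^sub>R e)"
    using assms u v by (intro dseg_le_dist) auto
  also have "\<dots> = norm (a *\<^sub>R (p - u *\<^sub>R e) + b *\<^sub>R (q - v *\<^sub>R e))"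
    by (simp add: dist_norm algebra_simps)
  also have "\<dots> \<le> a * dseg e p + b * dseg e q"
    using norm_triangle_ineq[of "a *\<^sub>R (p - u *\<^sub>R e)" "b *\<^sub>R (q - v *\<^sub>R e)"] assms u v
    by (simp add: dist_norm)
  finally show ?thesis .
qed

lemma dseg_conic_comb_le_max:
  assumes "0 \<le> a" "0 \<le> b" "a + b \<le> 1"
  shows "dseg e (a *\<^sub>R p + b *\<^sub>R q) \<le> max (dseg e p) (dseg e q)"
proof -
  let ?m = "max (dseg e p) (dseg e q)"
  have "a * dseg e p + b * dseg e q \<le> (a + b) * ?m"
    using assms by (simp add: distrib_right add_mono mult_left_mono)
  also have "\<dots> \<le> ?m"
    using assms dseg_nonneg[of e p] by (intro mult_left_le_one_le) auto
  finally show ?thesis using dseg_conic_comb_le[OF assms, of e p q] by linarith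
qed

lemma dseg_scaleR_le: "0 \<le> s \<Longrightarrow> s \<le> 1 \<Longrightarrow> dseg e (s *\<^sub>R p) \<le> dseg e p"
  using dseg_conic_comb_le_max[of s 0 e p 0] dseg_nonneg[of e p] by simp

text \<open>Quasiconvexity and minimality at the origin in one condition.\<close>
locale origin_quasiconvex =
  fixes g :: "real \<times> real \<Rightarrow> real"
  assumes conic_comb_le_max:
    "\<And>a b p q. 0 \<le> a \<Longrightarrow> 0 \<le> b \<Longrightarrow> a + b \<le> 1 \<Longrightarrow> g (a *\<^sub>R p + b *\<^sub>R q) \<le> max (g p) (g q)"
begin

lemma segment_le_max: "0 \<le> t \<Longrightarrow> t \<le> 1 \<Longrightarrow> g ((1 - t) *\<^sub>R p + t *\<^sub>R q) \<le> max (g p) (g q)"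
  using conic_comb_le_max[of "1 - t" t] by simp

lemma vertical_le_max:
  assumes "y0 \<le> y" "y \<le> y1"
  shows "g (x, y) \<le> max (g (x, y0)) (g (x, y1))"
proof (cases "y0 = y1")
  case False
  with assms have d: "y1 - y0 > 0" by simp
  define t where "t = (y - y0) / (y1 - y0)"
  have t: "0 \<le> t" "t \<le> 1" unfolding t_def using assms d by auto
  have "(1 - t) *\<^sub>R (x, y0) + t *\<^sub>R (x, y1) = (x, y0 + t * (y1 - y0))"
    by (simp add: algebra_simps)
  also have "y0 + t * (y1 - y0) = y" unfolding t_def using d by simp
  finally show ?thesis using segment_le_max[OF t, of "(x, y0)" "(x, y1)"] by simp
qed (use assms in auto)

lemma horizontal_le_max:
  assumes "x0 \<le> x" "x \<le> x1"
  shows "g (x, y) \<le> max (g (x0, y)) (g (x1, y))"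
proof (cases "x0 = x1")
  case False
  with assms have d: "x1 - x0 > 0" by simp
  define t where "t = (x - x0) / (x1 - x0)"
  have t: "0 \<le> t" "t \<le> 1" unfolding t_def using assms d by auto
  have "(1 - t) *\<^sub>R (x0, y) + t *\<^sub>R (x1, y) = (x0 + t * (x1 - x0), y)"
    by (simp add: algebra_simps)
  also have "x0 + t * (x1 - x0) = x" unfolding t_def using d by simp
  finally show ?thesis using segment_le_max[OF t, of "(x0, y)" "(x1, y)"] by simp
qed (use assms in auto)

text \<open>The corner lies in the triangle spanned by the origin and the other two points.\<close>
lemma corner_le_max:
  assumes "0 \<le> x1" "x1 \<le> x2" "0 \<le> y2" "y2 \<le> y1"
  shows "g (x1, y2) \<le> max (g (x1, y1)) (g (x2, y2))"
proof (cases "x2 * y1 - x1 * y2 > 0")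
  case True
  define D where "D = x2 * y1 - x1 * y2"
  have D: "D > 0" using True D_def by simp
  define a where "a = y2 * (x2 - x1) / D"
  define b where "b = x1 * (y1 - y2) / D"
  have a: "0 \<le> a" and b: "0 \<le> b" unfolding a_def b_def using assms D by simp_all
  have "D - (y2 * (x2 - x1) + x1 * (y1 - y2)) = (x2 - x1) * (y1 - y2)"
    by (simp add: D_def algebra_simps)
  moreover have "(x2 - x1) * (y1 - y2) \<ge> 0" using assms by simp
  ultimately have ab: "a + b \<le> 1"
    using D unfolding a_def b_def by (simp add: add_divide_distrib[symmetric] divide_le_eq_1)
  have "a * x1 + b * x2 = x1" "a * y1 + b * y2 = y2"
    using D unfolding a_def b_def D_def by (simp_all add: divide_simps) (simp_all add: algebra_simps)
  then have "a *\<^sub>R (x1, y1) + b *\<^sub>R (x2, y2) = (x1, y2)" by simp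
  then show ?thesis using conic_comb_le_max[OF a b ab, of "(x1, y1)" "(x2, y2)"] by simp
next
  case False
  have "x2 \<le> x1" if "y2 < y1"
proof -
    have "x1 * y2 \<le> x1 * y1" using assms by (intro mult_left_mono) auto
    then have "x2 * y1 \<le> x1 * y1" using False by linarith
    then show ?thesis using that assms by simp
  qed
  then have "(x1, y2) = (x1, y1) \<or> (x1, y2) = (x2, y2)" using assms by force
  then show ?thesis by auto
qed

text \<open>Here \<open>L\<close> lies on the right edge and \<open>U\<close> on the top edge of the box
  \<open>[0, a1] \<times> [0, b1]\<close>; a point of the box in the cone they span but beyond the segment
  \<open>LU\<close> lies in the quadrilateral \<open>L, (a1, b1), U\<close> and is reached through the two edges.\<close>
lemma right_top_cone_le_max:
  assumes L: "0 \<le> snd L" "snd L \<le> b1" "fst L = a1" "0 < a1"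
    and U: "0 \<le> fst U" "fst U \<le> a1" "snd U = b1" "0 < b1"
    and p: "p = \<alpha> *\<^sub>R L + \<beta> *\<^sub>R U" "0 \<le> \<alpha>" "0 \<le> \<beta>" "fst p \<le> a1" "snd p \<le> b1"
  shows "g p \<le> max (g L) (max (g U) (g (a1, b1)))"
proof (cases "\<alpha> + \<beta> \<le> 1")
  case True
  then show ?thesis using conic_comb_le_max[OF p(2,3) True, of L U] p(1) by auto
next
  case False
  have py: "snd L \<le> snd p"
proof -
    have "snd L \<le> (\<alpha> + \<beta>) * snd L" using False L by (simp add: mult_le_cancel_right1)
    also have "\<dots> \<le> \<alpha> * snd L + \<beta> * b1" using L p by (simp add: algebra_simps mult_left_mono)
    finally show ?thesis using p L U by simp
  qed
  have px: "fst U \<le> fst p"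
proof -
    have "fst U \<le> (\<alpha> + \<beta>) * fst U" using False U by (simp add: mult_le_cancel_right1)
    also have "\<dots> \<le> \<alpha> * a1 + \<beta> * fst U" using U p by (simp add: algebra_simps mult_left_mono)
    finally show ?thesis using p L U by simp
  qed
  have "g (a1, snd p) \<le> max (g L) (g (a1, b1))"
    using vertical_le_max[OF py p(5), of a1] L by (metis prod.collapse)
  moreover have "g (fst p, b1) \<le> max (g U) (g (a1, b1))"
    using horizontal_le_max[OF px p(4), of b1] U by (metis prod.collapse)
  moreover have "g (fst p, snd p) \<le> max (g (fst p, b1)) (g (a1, snd p))"
    by (rule corner_le_max) (use px py p L U in auto)
  ultimately show ?thesis by simp
qed

lemma far_edges_cone_le_max:
  assumes L: "0 \<le> fst L" "fst L \<le> a1" "0 \<le> snd L" "snd L \<le> b1"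
    and U: "0 \<le> fst U" "fst U \<le> a1" "0 \<le> snd U" "snd U \<le> b1"
    and far_L: "(fst L = a1 \<and> 0 < fst L) \<or> (snd L = b1 \<and> 0 < snd L)"
    and far_U: "(fst U = a1 \<and> 0 < fst U) \<or> (snd U = b1 \<and> 0 < snd U)"
    and p: "p = \<alpha> *\<^sub>R L + \<beta> *\<^sub>R U" "0 \<le> \<alpha>" "0 \<le> \<beta>" "fst p \<le> a1" "snd p \<le> b1"
  shows "g p \<le> max (g L) (max (g U) (g (a1, b1)))"
proof -
  have inside: "g p \<le> max (g L) (max (g U) (g (a1, b1)))" if "\<alpha> + \<beta> \<le> 1"
    using conic_comb_le_max[OF p(2,3) that, of L U] p(1) by auto
  consider "fst L = a1 \<and> 0 < fst L" "fst U = a1 \<and> 0 < fst U"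
    | "snd L = b1 \<and> 0 < snd L" "snd U = b1 \<and> 0 < snd U"
    | "fst L = a1 \<and> 0 < fst L" "snd U = b1 \<and> 0 < snd U"
    | "snd L = b1 \<and> 0 < snd L" "fst U = a1 \<and> 0 < fst U"
    using far_L far_U by blast
  then show ?thesis
  proof cases
    case 1
    then have "(\<alpha> + \<beta>) * a1 \<le> 1 * a1" using p by (simp add: algebra_simps)
    then show ?thesis using 1 by (intro inside) (simp add: mult_le_cancel_right)
  next
    case 2
    then have "(\<alpha> + \<beta>) * b1 \<le> 1 * b1" using p by (simp add: algebra_simps)
    then show ?thesis using 2 by (intro inside) (simp add: mult_le_cancel_right)
  next
    case 3
    show ?thesis by (rule right_top_cone_le_max[where \<alpha>=\<alpha> and \<beta>=\<beta>]) (use L U p 3 in auto)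
  next
    case 4
    have "g p \<le> max (g U) (max (g L) (g (a1, b1)))"
      by (rule right_top_cone_le_max[where \<alpha>=\<beta> and \<beta>=\<alpha>])
        (use L U p 4 in \<open>auto simp: add.commute\<close>)
    then show ?thesis by auto
  qed
qed

end

lemma far_edge_of_box:
  fixes L :: "real \<times> real"
  assumes "0 \<le> a0" "0 \<le> b0" "a0 \<le> fst L" "fst L \<le> a1" "b0 \<le> snd L" "snd L \<le> b1"
    and maximal: "\<And>t. t > 1 \<Longrightarrow>
      \<not> (a0 \<le> t * fst L \<and> t * fst L \<le> a1 \<and> b0 \<le> t * snd L \<and> t * snd L \<le> b1)"
  shows "(fst L = a1 \<and> 0 < fst L) \<or> (snd L = b1 \<and> 0 < snd L)"
proof (rule ccontr)
  assume c: "\<not> ?thesis"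
  define tx where "tx = (if fst L = 0 then 2 else a1 / fst L)"
  define ty where "ty = (if snd L = 0 then 2 else b1 / snd L)"
  have tx: "tx > 1" "tx * fst L \<le> a1" using c assms unfolding tx_def by (auto simp: field_simps)
  have ty: "ty > 1" "ty * snd L \<le> b1" using c assms unfolding ty_def by (auto simp: field_simps)
  define t where "t = min tx ty"
  have t1: "t > 1" using tx ty t_def by simp
  have "t * fst L \<le> tx * fst L" "t * snd L \<le> ty * snd L"
    using assms t_def by (auto intro: mult_right_mono)
  moreover have "fst L \<le> t * fst L" "snd L \<le> t * snd L"
    using t1 assms by (simp_all add: mult_le_cancel_right1)
  ultimately show False using maximal[OF t1] tx ty assms by linarith
qed

definition cross :: "real \<times> real \<Rightarrow> real \<times> real \<Rightarrow> real" where
  "cross e q = fst e * snd q - snd e * fst q"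

lemma abs_cross_le: "\<bar>cross e v\<bar> \<le> norm e * norm v"
proof -
  obtain ex ey where e: "e = (ex, ey)" by (cases e)
  obtain vx vy where v: "v = (vx, vy)" by (cases v)
  have "(ex\<^sup>2 + ey\<^sup>2) * (vx\<^sup>2 + vy\<^sup>2) - (cross e v)\<^sup>2 = (ex * vx + ey * vy)\<^sup>2"
    by (simp add: cross_def e v power2_eq_square algebra_simps)
  then have "(cross e v)\<^sup>2 \<le> (ex\<^sup>2 + ey\<^sup>2) * (vx\<^sup>2 + vy\<^sup>2)"
    by (metis diff_ge_0_iff_ge zero_le_power2)
  then have "sqrt ((cross e v)\<^sup>2) \<le> sqrt ((ex\<^sup>2 + ey\<^sup>2) * (vx\<^sup>2 + vy\<^sup>2))"
    by (rule real_sqrt_le_mono)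
  then show ?thesis by (simp add: e v norm_Pair real_sqrt_mult)
qed

lemma abs_cross_le_dseg: "\<bar>cross e p\<bar> \<le> norm e * dseg e p"
proof -
  obtain u where u: "0 \<le> u" "u \<le> 1" "dseg e p = dist p (u *\<^sub>R e)" by (rule dseg_attained)
  have "cross e p = cross e (p - u *\<^sub>R e)" by (simp add: cross_def algebra_simps)
  also have "\<bar>\<dots>\<bar> \<le> norm e * norm (p - u *\<^sub>R e)" by (rule abs_cross_le)
  finally show ?thesis using u by (simp add: dist_norm)
qed

text \<open>If the orthogonal projection of \<open>c\<close> onto the line through \<open>0\<close> and \<open>e\<close> falls
  inside the segment, the distance to the segment is the distance to the line.\<close>
lemma dseg_le_abs_cross:
  assumes "e \<noteq> 0" "0 \<le> inner c e" "norm c \<le> norm e"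
  shows "norm e * dseg e c \<le> \<bar>cross e c\<bar>"
proof -
  obtain ex ey where e: "e = (ex, ey)" by (cases e)
  obtain cx cy where c: "c = (cx, cy)" by (cases c)
  define n where "n = ex\<^sup>2 + ey\<^sup>2"
  have n: "n > 0"
    using assms(1) unfolding n_def e by (auto simp: sum_power2_gt_zero_iff zero_prod_def)
  have ne: "norm e = sqrt n" by (simp add: e n_def norm_Pair)
  define u where "u = inner c e / n"
  have "inner c e \<le> norm c * norm e" by (rule norm_cauchy_schwarz)
  also have "\<dots> \<le> norm e * norm e" using assms by (simp add: mult_right_mono)
  also have "\<dots> = n" using n by (simp add: ne)
  finally have u1: "u \<le> 1" using n unfolding u_def by simp
  have u0: "0 \<le> u" using n assms unfolding u_def by simp
  have ic: "inner c e = cx * ex + cy * ey" by (simp add: c e inner_prod_def)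
  have "n * ((cx - u * ex)\<^sup>2 + (cy - u * ey)\<^sup>2)
      = n * (cx\<^sup>2 + cy\<^sup>2) - 2 * u * n * (cx * ex + cy * ey) + u\<^sup>2 * n * n"
    by (simp add: n_def power2_eq_square algebra_simps)
  also have "\<dots> = n * (cx\<^sup>2 + cy\<^sup>2) - (cx * ex + cy * ey)\<^sup>2"
    using n by (simp add: u_def ic power2_eq_square field_simps)
  also have "\<dots> = (cross e c)\<^sup>2" by (simp add: n_def cross_def c e power2_eq_square algebra_simps)
  finally have key: "n * ((cx - u * ex)\<^sup>2 + (cy - u * ey)\<^sup>2) = (cross e c)\<^sup>2" .
  have "dseg e c \<le> sqrt ((cx - u * ex)\<^sup>2 + (cy - u * ey)\<^sup>2)"
    using dseg_le_dist[OF u0 u1, of e c] by (simp add: dist_norm c e norm_Pair)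
  then have "norm e * dseg e c \<le> sqrt n * sqrt ((cx - u * ex)\<^sup>2 + (cy - u * ey)\<^sup>2)"
    using ne by (metis mult_left_mono norm_ge_zero)
  also have "\<dots> = \<bar>cross e c\<bar>" using key by (simp add: real_sqrt_mult[symmetric])
  finally show ?thesis .
qed

lemma dseg_le_max_if_cross_between:
  assumes "e \<noteq> 0" "0 \<le> inner c e" "norm c \<le> norm e"
    and "cross e p \<le> cross e c \<and> cross e c \<le> cross e q \<or> cross e q \<le> cross e c \<and> cross e c \<le> cross e p"
  shows "dseg e c \<le> max (dseg e p) (dseg e q)"
proof -
  have "norm e * dseg e c \<le> \<bar>cross e c\<bar>" by (rule dseg_le_abs_cross[OF assms(1-3)])
  also have "\<dots> \<le> max \<bar>cross e p\<bar> \<bar>cross e q\<bar>" using assms(4) by auto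
  also have "\<dots> \<le> max (norm e * dseg e p) (norm e * dseg e q)"
    using abs_cross_le_dseg[of e p] abs_cross_le_dseg[of e q] by auto
  also have "\<dots> = norm e * max (dseg e p) (dseg e q)"
    using assms(1) by (simp add: max_mult_distrib_left)
  finally show ?thesis using assms(1) by simp
qed

lemma norm_dir [simp]: "norm (dir t) = 1"
  by (simp add: dir_def norm_Pair)

lemma polar_theta: "p = norm p *\<^sub>R dir (theta p)"
proof -
  obtain x y where p: "p = (x, y)" by (cases p)
  have "norm p = cmod (Complex x y)" by (simp add: p norm_Pair complex_norm)
  then show ?thesis
    using cos_Arg2pi[of "Complex x y"] sin_Arg2pi[of "Complex x y"]
    by (simp add: p theta_def dir_def)
qed

lemma dir_conic_comb:
  assumes "l \<le> t" "t \<le> u" "u - l < pi / 2"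
  obtains a b where "0 \<le> a" "0 \<le> b" "dir t = a *\<^sub>R dir l + b *\<^sub>R dir u"
proof (cases "l = u")
  case True
  with assms that[of 1 0] show ?thesis by auto
next
  case False
  define s where "s = sin (u - l)"
  have s: "s > 0" unfolding s_def using assms False by (intro sin_gt_zero) auto
  have "0 \<le> sin (u - t)" "0 \<le> sin (t - l)" using assms by (auto intro: sin_ge_zero)
  moreover have "s *\<^sub>R dir t = sin (u - t) *\<^sub>R dir l + sin (t - l) *\<^sub>R dir u"
    by (simp add: s_def dir_def sin_diff cos_diff algebra_simps)
  then have "dir t = (sin (u - t) / s) *\<^sub>R dir l + (sin (t - l) / s) *\<^sub>R dir u"
proof -
    have "dir t = (1 / s) *\<^sub>R (s *\<^sub>R dir t)" using s by simp
    also have "\<dots> = (sin (u - t) / s) *\<^sub>R dir l + (sin (t - l) / s) *\<^sub>R dir u"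
      unfolding \<open>s *\<^sub>R dir t = _\<close> by (simp add: scaleR_add_right)
    finally show ?thesis .
  qed
  ultimately show ?thesis using s that[of "sin (u - t) / s" "sin (t - l) / s"] by auto
qed

definition xsign :: "nat \<Rightarrow> real" where "xsign k = (if k = 2 \<or> k = 3 then -1 else 1)"
definition ysign :: "nat \<Rightarrow> real" where "ysign k = (if k \<ge> 3 then -1 else 1)"

definition flip :: "nat \<Rightarrow> real \<times> real \<Rightarrow> real \<times> real" where
  "flip k q = (xsign k * fst q, ysign k * snd q)"

lemma xsign_cases: "xsign k = 1 \<or> xsign k = -1"
  and ysign_cases: "ysign k = 1 \<or> ysign k = -1"
  by (simp_all add: xsign_def ysign_def)

lemma flip_flip [simp]: "flip k (flip k q) = q"
  using xsign_cases[of k] ysign_cases[of k] by (auto simp: flip_def)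

lemma flip_conic_comb: "flip k (a *\<^sub>R p + b *\<^sub>R q) = a *\<^sub>R flip k p + b *\<^sub>R flip k q"
  by (simp add: flip_def algebra_simps)

lemma flip_scaleR: "flip k (a *\<^sub>R p) = a *\<^sub>R flip k p"
  by (simp add: flip_def algebra_simps)

lemma cross_flip: "cross (flip k u) (flip k v) = xsign k * ysign k * cross u v"
  by (simp add: cross_def flip_def algebra_simps)

lemma inner_flip: "inner (flip k u) (flip k v) = inner u v"
  using xsign_cases[of k] ysign_cases[of k] by (auto simp: flip_def inner_prod_def)

lemma quadrant_signs:
  assumes "k \<in> {1..4}" "(real k - 1) * pi / 2 \<le> t" "t < real k * pi / 2"
  shows "0 \<le> xsign k * cos t \<and> 0 \<le> ysign k * sin t"
proof -
  consider "k = 1" | "k = 2" | "k = 3" | "k = 4" using assms(1) by force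
  then show ?thesis
  proof cases
    case 1
    then show ?thesis using assms by (auto simp: xsign_def ysign_def intro!: cos_ge_zero sin_ge_zero)
  next
    case 2
    have "0 \<le> cos (t - pi)" using assms 2 by (intro cos_ge_zero) auto
    moreover have "0 \<le> sin t" using assms 2 by (intro sin_ge_zero) auto
    ultimately show ?thesis using 2 by (simp add: xsign_def ysign_def cos_diff)
  next
    case 3
    have "0 \<le> cos (t - pi)" using assms 3 by (intro cos_ge_zero) auto
    moreover have "sin t \<le> 0" using assms 3 by (intro sin_le_zero) auto
    ultimately show ?thesis using 3 by (simp add: xsign_def ysign_def cos_diff)
  next
    case 4
    have "0 \<le> cos (2 * pi - t)" using assms 4 by (intro cos_ge_zero) auto
    moreover have "sin t \<le> 0" using assms 4 by (intro sin_le_zero) auto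
    ultimately show ?thesis using 4 by (simp add: xsign_def ysign_def cos_diff)
  qed
qed

lemma flip_quadrant_nonneg:
  assumes "k \<in> {1..4}" "p \<in> quadrant k"
  shows "0 \<le> fst (flip k p)" "0 \<le> snd (flip k p)"
proof -
  have "(real k - 1) * pi / 2 \<le> theta p" "theta p < real k * pi / 2"
    using assms(2) by (auto simp: quadrant_def)
  note signs = quadrant_signs[OF assms(1) this]
  have "fst p = norm p * cos (theta p)" "snd p = norm p * sin (theta p)"
    using polar_theta[of p] by (metis dir_def fst_conv real_scaleR_def scaleR_Pair snd_conv)+
  then show "0 \<le> fst (flip k p)" "0 \<le> snd (flip k p)"
    using signs by (simp_all add: flip_def mult.left_commute[of "xsign k"] mult.left_commute[of "ysign k"])
qed

definition ray_box_radii :: "(real \<times> real) set \<Rightarrow> real \<Rightarrow> real set" where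
  "ray_box_radii P t = {r. 0 \<le> r \<and> r *\<^sub>R dir t \<in> bbox P}"

lemma bbox_eq_Times: "bbox P = {xmin P..xmax P} \<times> {ymin P..ymax P}"
  by (auto simp: bbox_def)

lemma ray_box_radii_bdd_above: "bdd_above (ray_box_radii P t)"
proof -
  obtain B where B: "\<And>x. x \<in> bbox P \<Longrightarrow> norm x \<le> B"
    using compact_imp_bounded[OF compact_Times[OF compact_Icc compact_Icc]]
    unfolding bbox_eq_Times bounded_iff by blast
  show ?thesis
  proof (rule bdd_aboveI)
    fix r assume "r \<in> ray_box_radii P t"
    then have "0 \<le> r" "r *\<^sub>R dir t \<in> bbox P" by (simp_all add: ray_box_radii_def)
    with B[OF this(2)] show "r \<le> B" by simp
  qed
qed

lemma closed_ray_box_radii: "closed (ray_box_radii P t)"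
proof -
  have "ray_box_radii P t = {r. 0 \<le> r} \<inter> (\<lambda>r. r *\<^sub>R dir t) -` bbox P"
    by (auto simp: ray_box_radii_def)
  also have "closed \<dots>"
    unfolding bbox_eq_Times
    by (intro closed_Int closed_Collect_le continuous_closed_vimage closed_Times closed_atLeastAtMost
        continuous_intros)
  finally show ?thesis .
qed

lemma norm_mem_ray_box_radii: "p \<in> bbox P \<Longrightarrow> norm p \<in> ray_box_radii P (theta p)"
  using polar_theta[of p] by (auto simp: ray_box_radii_def)

lemma ray_box_near_eq_scaleR:
  assumes "p \<in> bbox P" "p \<noteq> 0"
  obtains s where "0 \<le> s" "s \<le> 1" "ray_box_near P (theta p) = s *\<^sub>R p"
proof
  let ?R = "ray_box_radii P (theta p)"
  have n: "norm p \<in> ?R" by (rule norm_mem_ray_box_radii[OF assms(1)])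
  have "?R \<noteq> {}" using n by blast
  then have "0 \<le> Inf ?R" by (rule cInf_greatest) (simp add: ray_box_radii_def)
  moreover have "Inf ?R \<le> norm p"
    using n by (intro cInf_lower) (auto simp: ray_box_radii_def intro!: bdd_belowI[of _ 0])
  ultimately show "0 \<le> Inf ?R / norm p" "Inf ?R / norm p \<le> 1" using assms(2) by auto
  have "(Inf ?R / norm p) *\<^sub>R (norm p *\<^sub>R dir (theta p)) = Inf ?R *\<^sub>R dir (theta p)"
    using assms(2) by simp
  then show "ray_box_near P (theta p) = (Inf ?R / norm p) *\<^sub>R p"
    by (simp add: ray_box_near_def ray_box_radii_def flip: polar_theta)
qed

lemma dseg_ray_box_near_le:
  assumes "p \<in> bbox P" "p \<noteq> 0"
  shows "dseg e (ray_box_near P (theta p)) \<le> dseg e p"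
  using ray_box_near_eq_scaleR[OF assms] dseg_scaleR_le by metis

lemma ray_box_far:
  assumes "p \<in> bbox P" "p \<noteq> 0"
  shows "ray_box_far P (theta p) \<in> bbox P"
    and "\<And>s. s > 1 \<Longrightarrow> s *\<^sub>R ray_box_far P (theta p) \<notin> bbox P"
    and "\<exists>c>0. dir (theta p) = c *\<^sub>R ray_box_far P (theta p)"
proof -
  let ?R = "ray_box_radii P (theta p)"
  have far: "ray_box_far P (theta p) = Sup ?R *\<^sub>R dir (theta p)"
    by (simp add: ray_box_far_def ray_box_radii_def)
  have n: "norm p \<in> ?R" by (rule norm_mem_ray_box_radii[OF assms(1)])
  have S: "Sup ?R \<in> ?R"
    using n ray_box_radii_bdd_above closed_ray_box_radii by (intro closed_contains_Sup) auto
  have "norm p \<le> Sup ?R" using n ray_box_radii_bdd_above by (intro cSup_upper) auto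
  then have S_pos: "Sup ?R > 0" using assms(2) by (metis less_le_trans zero_less_norm_iff)
  show "ray_box_far P (theta p) \<in> bbox P" using S by (simp add: far ray_box_radii_def)
  show "s *\<^sub>R ray_box_far P (theta p) \<notin> bbox P" if "s > 1" for s
  proof
    assume "s *\<^sub>R ray_box_far P (theta p) \<in> bbox P"
    then have "s * Sup ?R \<in> ?R" using that S_pos by (simp add: far ray_box_radii_def)
    then have "s * Sup ?R \<le> Sup ?R" using ray_box_radii_bdd_above by (intro cSup_upper) auto
    then show False using that S_pos by simp
  qed
  show "\<exists>c>0. dir (theta p) = c *\<^sub>R ray_box_far P (theta p)"
    using S_pos by (intro exI[of _ "1 / Sup ?R"]) (simp add: far)
qed

lemma origin_quasiconvex_dseg_flip: "origin_quasiconvex (\<lambda>q. dseg e (flip k q))"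
  by unfold_locales (simp add: flip_conic_comb dseg_conic_comb_le_max)

text \<open>The box \<open>[a0, a1] \<times> [b0, b1]\<close> is the bounding box of \<open>P\<close> reflected into the
  first quadrant, so that \<open>c_n\<close> and \<open>c_f\<close> become \<open>(a0, b0)\<close> and \<open>(a1, b1)\<close>.\<close>
locale quadrant_points =
  fixes P :: "(real \<times> real) set" and k :: nat
  assumes finite: "finite P" and nonempty: "P \<noteq> {}"
    and k: "k \<in> {1..4}" and subset_quadrant: "P \<subseteq> quadrant k"
begin

definition a0 :: real where "a0 = xmin (flip k ` P)"
definition a1 :: real where "a1 = xmax (flip k ` P)"
definition b0 :: real where "b0 = ymin (flip k ` P)"
definition b1 :: real where "b1 = ymax (flip k ` P)"

lemma flip_nonneg: "p \<in> P \<Longrightarrow> 0 \<le> fst (flip k p) \<and> 0 \<le> snd (flip k p)"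
  using flip_quadrant_nonneg[OF k] subset_quadrant by blast

lemma point_nonzero: "p \<in> P \<Longrightarrow> p \<noteq> 0"
  using subset_quadrant by (auto simp: quadrant_def)

lemma flip_in_box:
  "p \<in> P \<Longrightarrow> a0 \<le> fst (flip k p) \<and> fst (flip k p) \<le> a1 \<and> b0 \<le> snd (flip k p) \<and> snd (flip k p) \<le> b1"
  using finite by (auto simp: a0_def a1_def b0_def b1_def xmin_def xmax_def ymin_def ymax_def)

lemma box_bounds_attained:
  shows "\<exists>p\<in>P. fst (flip k p) = a0" "\<exists>p\<in>P. fst (flip k p) = a1"
    and "\<exists>p\<in>P. snd (flip k p) = b0" "\<exists>p\<in>P. snd (flip k p) = b1"
proof -
  have "finite (flip k ` P)" "flip k ` P \<noteq> {}" using finite nonempty by simp_all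
  then show "\<exists>p\<in>P. fst (flip k p) = a0" "\<exists>p\<in>P. fst (flip k p) = a1"
    "\<exists>p\<in>P. snd (flip k p) = b0" "\<exists>p\<in>P. snd (flip k p) = b1"
    unfolding a0_def a1_def b0_def b1_def xmin_def xmax_def ymin_def ymax_def
    by (metis (no_types, lifting) Min_in Max_in finite_imageI image_is_empty imageE)+
qed

lemma box_bounds_nonneg: "0 \<le> a0" "a0 \<le> a1" "0 \<le> b0" "b0 \<le> b1"
proof -
  obtain p q where "p \<in> P" "fst (flip k p) = a0" "q \<in> P" "snd (flip k q) = b0"
    using box_bounds_attained by blast
  then show "0 \<le> a0" "a0 \<le> a1" "0 \<le> b0" "b0 \<le> b1"
    using flip_nonneg flip_in_box by (metis order.trans)+
qed

lemma x_bounds: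
  "xsign k = 1 \<and> a0 = xmin P \<and> a1 = xmax P \<or> xsign k = -1 \<and> a0 = - xmax P \<and> a1 = - xmin P"
proof -
  have "fst ` flip k ` P = (\<lambda>x. xsign k * x) ` fst ` P" by (auto simp: flip_def image_image)
  then show ?thesis
    using xsign_cases[of k] finite nonempty by (auto simp: a0_def a1_def xmin_def xmax_def)
qed

lemma y_bounds:
  "ysign k = 1 \<and> b0 = ymin P \<and> b1 = ymax P \<or> ysign k = -1 \<and> b0 = - ymax P \<and> b1 = - ymin P"
proof -
  have "snd ` flip k ` P = (\<lambda>y. ysign k * y) ` snd ` P" by (auto simp: flip_def image_image)
  then show ?thesis
    using ysign_cases[of k] finite nonempty by (auto simp: b0_def b1_def ymin_def ymax_def)
qed

lemma mem_bbox_iff_flip: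
  "q \<in> bbox P \<longleftrightarrow> a0 \<le> fst (flip k q) \<and> fst (flip k q) \<le> a1 \<and> b0 \<le> snd (flip k q) \<and> snd (flip k q) \<le> b1"
  using x_bounds y_bounds by (auto simp: bbox_def flip_def)

lemma subset_bbox: "P \<subseteq> bbox P"
  using flip_in_box mem_bbox_iff_flip by blast

lemma c_far_eq: "c_far P = flip k (a1, b1)"
  using x_bounds y_bounds box_bounds_nonneg
  by (elim disjE) (simp_all add: c_far_def flip_def)

lemma c_near_eq: "c_near P = flip k (a0, b0)"
  using x_bounds y_bounds box_bounds_nonneg
  by (elim disjE) (simp_all add: c_near_def flip_def)

lemma flip_ray_box_far_on_far_edge:
  assumes "p \<in> P"
  defines "L \<equiv> flip k (ray_box_far P (theta p))"
  shows "0 \<le> fst L" "fst L \<le> a1" "0 \<le> snd L" "snd L \<le> b1"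
    and "fst L = a1 \<and> 0 < fst L \<or> snd L = b1 \<and> 0 < snd L"
proof -
  have p: "p \<in> bbox P" "p \<noteq> 0" using assms(1) subset_bbox point_nonzero by auto
  have L: "a0 \<le> fst L" "fst L \<le> a1" "b0 \<le> snd L" "snd L \<le> b1"
    using ray_box_far(1)[OF p] unfolding mem_bbox_iff_flip L_def by auto
  then show "0 \<le> fst L" "fst L \<le> a1" "0 \<le> snd L" "snd L \<le> b1"
    using box_bounds_nonneg by auto
  have "\<not> (a0 \<le> t * fst L \<and> t * fst L \<le> a1 \<and> b0 \<le> t * snd L \<and> t * snd L \<le> b1)"
    if "t > 1" for t
    using ray_box_far(2)[OF p that] mem_bbox_iff_flip[of "t *\<^sub>R ray_box_far P (theta p)"]
    by (simp add: L_def flip_scaleR)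
  then show "fst L = a1 \<and> 0 < fst L \<or> snd L = b1 \<and> 0 < snd L"
    using far_edge_of_box[OF box_bounds_nonneg(1,3) L] by blast
qed

lemma dseg_le_d_max: "p \<in> P \<Longrightarrow> dseg e p \<le> d_max P e"
  unfolding d_max_def using finite by (intro Max_ge) auto

lemma d_max_attained: "\<exists>p\<in>P. d_max P e = dseg e p"
proof -
  have "Max (dseg e ` P) \<in> dseg e ` P" using finite nonempty by (intro Max_in) auto
  then show ?thesis unfolding d_max_def by auto
qed

lemma theta_lb_le: "p \<in> P \<Longrightarrow> theta_lb P \<le> theta p"
  unfolding theta_lb_def using finite by (intro Min_le) auto

lemma theta_ub_ge: "p \<in> P \<Longrightarrow> theta p \<le> theta_ub P"
  unfolding theta_ub_def using finite by (intro Max_ge) auto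

lemma theta_lb_attained: "\<exists>p\<in>P. theta p = theta_lb P"
proof -
  have "Min (theta ` P) \<in> theta ` P" using finite nonempty by (intro Min_in) auto
  then show ?thesis unfolding theta_lb_def by auto
qed

lemma theta_ub_attained: "\<exists>p\<in>P. theta p = theta_ub P"
proof -
  have "Max (theta ` P) \<in> theta ` P" using finite nonempty by (intro Max_in) auto
  then show ?thesis unfolding theta_ub_def by auto
qed

lemma dseg_l1_le_d_max: "dseg e (l1 P) \<le> d_max P e"
proof -
  obtain p where "p \<in> P" "theta p = theta_lb P" using theta_lb_attained by blast
  then show ?thesis
    using dseg_ray_box_near_le[of p P e] subset_bbox point_nonzero dseg_le_d_max[of p e]
    by (auto simp: l1_def)
qed

lemma dseg_u1_le_d_max: "dseg e (u1 P) \<le> d_max P e"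
proof -
  obtain p where "p \<in> P" "theta p = theta_ub P" using theta_ub_attained by blast
  then show ?thesis
    using dseg_ray_box_near_le[of p P e] subset_bbox point_nonzero dseg_le_d_max[of p e]
    by (auto simp: u1_def)
qed

lemma dseg_c_near_le_d_max: "dseg e (c_near P) \<le> d_max P e"
proof -
  obtain p q where p: "p \<in> P" "fst (flip k p) = a0" and q: "q \<in> P" "snd (flip k q) = b0"
    using box_bounds_attained by blast
  have "dseg e (flip k (a0, b0))
      \<le> max (dseg e (flip k (a0, snd (flip k p)))) (dseg e (flip k (fst (flip k q), b0)))"
    by (rule origin_quasiconvex.corner_le_max[OF origin_quasiconvex_dseg_flip])
      (use box_bounds_nonneg flip_in_box[OF p(1)] flip_in_box[OF q(1)] p q in auto)
  also have "\<dots> = max (dseg e p) (dseg e q)"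
    using p(2) q(2) by (metis flip_flip prod.collapse)
  also have "\<dots> \<le> d_max P e" using dseg_le_d_max p(1) q(1) by simp
  finally show ?thesis unfolding c_near_eq .
qed

text \<open>The sign of the cross product with \<open>e\<close> orders points by angle, and \<open>c_f\<close> lies
  angularly between the points of \<open>P\<close> on the two far edges of the box.\<close>
lemma dseg_c_far_le_d_max:
  assumes "e \<noteq> 0" "e \<in> quadrant k" "norm (c_far P) \<le> norm e"
  shows "dseg e (c_far P) \<le> d_max P e"
proof -
  obtain p q where p: "p \<in> P" "fst (flip k p) = a1" and q: "q \<in> P" "snd (flip k q) = b1"
    using box_bounds_attained by blast
  define e' where "e' = flip k e"
  have e: "e = flip k e'" by (simp add: e'_def)
  have e': "0 \<le> fst e'" "0 \<le> snd e'" using flip_quadrant_nonneg[OF k assms(2)] by (auto simp: e'_def)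
  have "0 \<le> a1" "0 \<le> b1" using box_bounds_nonneg by linarith+
  then have inner: "0 \<le> inner (c_far P) e"
    unfolding c_far_eq e inner_flip using e' by (simp add: inner_prod_def)
  have "cross e' (flip k p) \<le> cross e' (a1, b1)" "cross e' (a1, b1) \<le> cross e' (flip k q)"
    using flip_in_box[OF p(1)] flip_in_box[OF q(1)] p q e'
    by (simp_all add: cross_def mult_left_mono)
  moreover have "cross e (flip k r) = xsign k * ysign k * cross e' r" for r
    unfolding e cross_flip by simp
  moreover have "xsign k * ysign k = 1 \<or> xsign k * ysign k = -1"
    using xsign_cases[of k] ysign_cases[of k] by auto
  ultimately have "cross e p \<le> cross e (c_far P) \<and> cross e (c_far P) \<le> cross e q \<or>
      cross e q \<le> cross e (c_far P) \<and> cross e (c_far P) \<le> cross e p"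
    unfolding c_far_eq by (metis flip_flip mult_1 mult_minus1 neg_le_iff_le)
  then have "dseg e (c_far P) \<le> max (dseg e p) (dseg e q)"
    by (rule dseg_le_max_if_cross_between[OF assms(1) inner assms(3)])
  also have "\<dots> \<le> d_max P e" using dseg_le_d_max p(1) q(1) by simp
  finally show ?thesis .
qed

text \<open>Every point of \<open>P\<close> lies in the cone spanned by \<open>l_2\<close> and \<open>u_2\<close>: its angle is
  between the bounding angles, which differ by less than \<open>\<pi>/2\<close>.\<close>
lemma flip_conic_comb_l2_u2:
  assumes "p \<in> P"
  obtains \<alpha> \<beta> where "0 \<le> \<alpha>" "0 \<le> \<beta>" "flip k p = \<alpha> *\<^sub>R flip k (l2 P) + \<beta> *\<^sub>R flip k (u2 P)"
proof -
  obtain pl where pl: "pl \<in> P" "theta pl = theta_lb P" using theta_lb_attained by blast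
  obtain pu where pu: "pu \<in> P" "theta pu = theta_ub P" using theta_ub_attained by blast
  have "(real k - 1) * pi / 2 \<le> theta pl" "theta pu < real k * pi / 2"
    using subset_quadrant pl(1) pu(1) by (auto simp: quadrant_def)
  moreover have "real k * pi / 2 - (real k - 1) * pi / 2 = pi / 2" by (simp add: field_simps)
  ultimately have "theta pu - theta pl < pi / 2" by linarith
  then obtain a b where ab: "0 \<le> a" "0 \<le> b" "dir (theta p) = a *\<^sub>R dir (theta pl) + b *\<^sub>R dir (theta pu)"
    using dir_conic_comb theta_lb_le[OF assms] theta_ub_ge[OF assms] pl(2) pu(2) by metis
  obtain cl where cl: "cl > 0" "dir (theta pl) = cl *\<^sub>R l2 P"
    using ray_box_far(3)[of pl P] pl subset_bbox point_nonzero by (auto simp: l2_def)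
  obtain cu where cu: "cu > 0" "dir (theta pu) = cu *\<^sub>R u2 P"
    using ray_box_far(3)[of pu P] pu subset_bbox point_nonzero by (auto simp: u2_def)
  have "p = (norm p * a * cl) *\<^sub>R l2 P + (norm p * b * cu) *\<^sub>R u2 P"
    by (subst polar_theta) (simp add: ab(3) cl(2) cu(2) scaleR_add_right mult.assoc)
  then have "flip k p = (norm p * a * cl) *\<^sub>R flip k (l2 P) + (norm p * b * cu) *\<^sub>R flip k (u2 P)"
    by (metis flip_conic_comb)
  then show ?thesis using that[of "norm p * a * cl" "norm p * b * cu"] ab cl cu by auto
qed

lemma d_max_le_d_ub: "d_max P e \<le> d_ub P e"
proof -
  obtain p where p: "p \<in> P" "d_max P e = dseg e p" using d_max_attained by blast
  obtain \<alpha> \<beta> where comb: "0 \<le> \<alpha>" "0 \<le> \<beta>"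
    "flip k p = \<alpha> *\<^sub>R flip k (l2 P) + \<beta> *\<^sub>R flip k (u2 P)"
    using flip_conic_comb_l2_u2[OF p(1)] .
  obtain pl where pl: "pl \<in> P" "theta pl = theta_lb P" using theta_lb_attained by blast
  obtain pu where pu: "pu \<in> P" "theta pu = theta_ub P" using theta_ub_attained by blast
  have "dseg e (flip k (flip k p)) \<le> max (dseg e (flip k (flip k (l2 P))))
      (max (dseg e (flip k (flip k (u2 P)))) (dseg e (flip k (a1, b1))))"
    by (rule origin_quasiconvex.far_edges_cone_le_max[OF origin_quasiconvex_dseg_flip _ _ _ _ _ _ _ _ _ _ comb(3,1,2)])
      (use flip_ray_box_far_on_far_edge[OF pl(1)] flip_ray_box_far_on_far_edge[OF pu(1)]
        flip_in_box[OF p(1)] pl(2) pu(2) in \<open>simp_all add: l2_def u2_def\<close>)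
  then show ?thesis using p(2) by (simp add: d_ub_def c_far_eq)
qed

end

theorem theorem3:
  fixes P :: "(real \<times> real) set" and e :: "real \<times> real" and k :: nat
  assumes "finite P" and "P \<noteq> {}"
    and "k \<in> {1..4}" and "P \<subseteq> quadrant k"
    and "e \<noteq> 0" and "e \<in> quadrant k"
    and "theta_lb P \<le> theta e" and "theta e \<le> theta_ub P"
  shows "d_lb P e \<le> d_max P e \<and> d_max P e \<le> d_ub P e"
proof
  interpret quadrant_points P k using assms(1-4) by unfold_locales
  have "min (dseg e (l1 P)) (dseg e (l2 P)) \<le> d_max P e"
    using dseg_l1_le_d_max by (simp add: min.coboundedI1)
  moreover have "min (dseg e (u1 P)) (dseg e (u2 P)) \<le> d_max P e"
    using dseg_u1_le_d_max by (simp add: min.coboundedI1)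
  moreover have "(if norm e < norm (c_far P) then dseg e (c_near P) else dseg e (c_far P)) \<le> d_max P e"
    using dseg_c_near_le_d_max dseg_c_far_le_d_max[OF assms(5,6)] by simp
  ultimately show "d_lb P e \<le> d_max P e" by (simp add: d_lb_def)
  show "d_max P e \<le> d_ub P e" by (rule d_max_le_d_ub)
qed

end
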